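(* Let $\mathbf A\in\mathbb C^{n\times n}$ with $\operatorname{Ind}\mathbf A=k_1$ and $\operatorname{rank}\mathbf A^{k_1+1}=\operatorname{rank}\mathbf A^{k_1}=r_1\le n$, let $\mathbf B\in\mathbb C^{m\times m}$ with $\operatorname{Ind}\mathbf B=k_2$ and $\operatorname{rank}\mathbf B^{k_2+1}=\operatorname{rank}\mathbf B^{k_2}=r_2\le m$, let $\mathbf D\in\mathbb C^{n\times m}$, and let $\tilde{\mathbf D}=\mathbf A^{k_1}\mathbf D\mathbf B^{k_2}$ with $l$-th row $\tilde{\mathbf d}_{l.}$ and $t$-th column $\tilde{\mathbf d}_{.t}$. For $i=1,\dots,n$, $j=1,\dots,m$ define the column vector $\mathbf d^{\mathbf B}_{.j}\in\mathbb C^{n}$ with $l$-th entry $\sum_{\alpha\in I_{r_2,m}\{j\}}\left|\left(\mathbf B^{k_2+1}_{j.}(\tilde{\mathbf d}_{l.})\right)^{\alpha}_{\alpha}\right|$ and the row vector $\mathbf d^{\mathbf A}_{i.}\in\mathbb C^{1\times m}$ with $t$-th entry $\sum_{\beta\in J_{r_1,n}\{i\}}\left|\left(\mathbf A^{k_1+1}_{.i}(\tilde{\mathbf d}_{.t})\right)^{\beta}_{\beta}\right|$. Then the Drazin inverse solution $\mathbf X=\mathbf A^{D}\mathbf D\mathbf B^{D}=(x_{ij})\in\mathbb C^{n\times m}$ of $\mathbf A\mathbf X\mathbf B=\mathbf D$ satisfies, for all $i,j$, \[x_{ij}=\frac{\sum_{\beta\in J_{r_1,n}\{i\}}\left|\left(\mathbf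 A^{k_1+1}_{.i}(\mathbf d^{\mathbf B}_{.j})\right)^{\beta}_{\beta}\right|}{\sum_{\beta\in J_{r_1,n}}\left|(\mathbf A^{k_1+1})^{\beta}_{\beta}\right|\sum_{\alpha\in I_{r_2,m}}\left|(\mathbf B^{k_2+1})^{\alpha}_{\alpha}\right|} =\frac{\sum_{\alpha\in I_{r_2,m}\{j\}}\left|\left(\mathbf B^{k_2+1}_{j.}(\mathbf d^{\mathbf A}_{i.})\right)^{\alpha}_{\alpha}\right|}{\sum_{\beta\in J_{r_1,n}}\left|(\mathbf A^{k_1+1})^{\beta}_{\beta}\right|\sum_{\alpha\in I_{r_2,m}}\left|(\mathbf B^{k_2+1})^{\alpha}_{\alpha}\right|}.\]
   Context: For a square $\mathbf M$, $\operatorname{Ind}\mathbf M$ is the smallest nonnegative $k$ with $\operatorname{rank}\mathbf M^{k+1}=\operatorname{rank}\mathbf M^{k}$; the Drazin inverse $\mathbf M^{D}$ is the unique $\mathbf X$ with $\mathbf M^{k+1}\mathbf X=\mathbf M^{k}$, $\mathbf X\mathbf M\mathbf X=\mathbf X$, $\mathbf M\mathbf X=\mathbf X\mathbf M$, $k=\operatorname{Ind}\mathbf M$. $\mathbf M_{.i}(\mathbf c)$ (resp. $\mathbf M_{j.}(\mathbf c)$) is obtained by replacing the $i$-th column (resp. $j$-th row) of $\mathbf M$ by $\mathbf c$. For $1\le k\le s$, $L_{k,s}$ is the set of strictly increasing sequences of $k$ elements of $\{1,\dots,s\}$; $I_{k,s}=J_{k,s}=L_{k,s}$, $I_{k,s}\{i\}=J_{k,s}\{i\}=\{\alpha\in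 L_{k,s}:i\in\alpha\}$; $\mathbf M^{\alpha}_{\alpha}$ is the principal submatrix indexed by $\alpha$; $|\cdot|$ is the determinant. *)

theory Defs
  imports "Jordan_Normal_Form.Determinant" "Jordan_Normal_Form.DL_Rank" "Jordan_Normal_Form.DL_Submatrix"
begin

definition mrank :: "'a::field mat \<Rightarrow> nat" where
  "mrank M = vec_space.rank (dim_row M) M"

definition mat_index :: "'a::field mat \<Rightarrow> nat" where
  "mat_index M = (LEAST k. mrank (M ^\<^sub>m (k+1)) = mrank (M ^\<^sub>m k))"

definition drazin_inv :: "'a::field mat \<Rightarrow> 'a mat" where
  "drazin_inv M = (THE X. X \<in> carrier_mat (dim_row M) (dim_row M) \<and>
      M ^\<^sub>m (mat_index M + 1) * X = M ^\<^sub>m (mat_index M) \<and>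
      X * M * X = X \<and> M * X = X * M)"

definition replace_row :: "'a mat \<Rightarrow> 'a vec \<Rightarrow> nat \<Rightarrow> 'a mat" where
  "replace_row M c j = mat (dim_row M) (dim_col M) (\<lambda>(i,k). if i = j then c $ k else M $$ (i,k))"

(* L_{k,s}: strictly increasing k-sequences in {1..s}, represented (0-based) as k-subsets of {0..<s} *)
definition idx_sets :: "nat \<Rightarrow> nat \<Rightarrow> nat set set" where
  "idx_sets k s = {\<alpha>. \<alpha> \<subseteq> {0..<s} \<and> card \<alpha> = k}"

definition idx_sets_with :: "nat \<Rightarrow> nat \<Rightarrow> nat \<Rightarrow> nat set set" where
  "idx_sets_with k s i = {\<alpha> \<in> idx_sets k s. i \<in> \<alpha>}"

definition principal_sub :: "'a mat \<Rightarrow> nat set \<Rightarrow> 'a mat" where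
  "principal_sub M \<alpha> = submatrix M \<alpha> \<alpha>"

end

theory Submission
  imports Defs
begin

text \<open>
  Let \<open>r = rank A\<^sup>k\<close>. Because \<open>rank A\<^sup>k\<^sup>+\<^sup>1 = rank A\<^sup>k\<close>, the matrix \<open>A\<^sup>k\<^sup>+\<^sup>1\<close> has a full-rank
  factorisation \<open>F G\<close> (\<open>F\<close> of size \<open>n \<times> r\<close>, \<open>G\<close> of size \<open>r \<times> n\<close>) with \<open>G F\<close> invertible, and
  \<open>A\<^sup>k = F W = E G\<close>, \<open>A\<^sup>D = F (G F)\<^sup>-\<^sup>1 W = E (G F)\<^sup>-\<^sup>1 G\<close> for suitable \<open>W\<close>, \<open>E\<close>.
  By Cauchy--Binet the principal \<open>r \<times> r\<close> minors of \<open>F G\<close> sum to \<open>det (G F)\<close>. Replacing column \<open>i\<close>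
  of \<open>F G\<close> by \<open>F w\<close> and summing only over the minors containing \<open>i\<close> gives, again by Cauchy--Binet,
  the difference of two determinants of rank-one updates of \<open>G F\<close>; the matrix determinant lemma
  evaluates it to \<open>det (G F) \<cdot> (F (G F)\<^sup>-\<^sup>1 w)\<^sub>i\<close>. This is a Cramer rule for \<open>A\<^sup>D Y\<close> (and, transposed,
  for \<open>Y B\<^sup>D\<close>); substituting the row rule for \<open>B\<close> into the column rule for \<open>A\<close>, and vice versa,
  yields both representations of \<open>A\<^sup>D D B\<^sup>D\<close>.
\<close>

section \<open>Cauchy--Binet formula\<close>

lemma card_less_than_member:
  fixes \<beta> :: "nat set"
  assumes "finite \<beta>" "a \<in> \<beta>"
  shows "card {x\<in>\<beta>. x < a} < card \<beta>"
  using assms by (intro psubset_card_mono) auto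

lemma bij_betw_pick:
  assumes "finite \<beta>" "card \<beta> = r"
  shows "bij_betw (pick \<beta>) {0..<r} \<beta>" and "bij_betw (\<lambda>a. card {x\<in>\<beta>. x < a}) \<beta> {0..<r}"
proof -
  have "\<forall>i\<in>{0..<r}. card {x\<in>\<beta>. x < pick \<beta> i} = i" using card_pick_le assms(2) by auto
  moreover have "\<forall>a\<in>\<beta>. pick \<beta> (card {x\<in>\<beta>. x < a}) = a" using pick_card_in_set by auto
  moreover have "pick \<beta> ` {0..<r} \<subseteq> \<beta>" using pick_in_set_le assms(2) by auto
  moreover have "(\<lambda>a. card {x\<in>\<beta>. x < a}) ` \<beta> \<subseteq> {0..<r}" using card_less_than_member assms by auto
  ultimately show "bij_betw (pick \<beta>) {0..<r} \<beta>" "bij_betw (\<lambda>a. card {x\<in>\<beta>. x < a}) \<beta> {0..<r}"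
    by (auto intro: bij_betw_byWitness)
qed

lemma submatrix_rows_carrier:
  assumes "F \<in> carrier_mat n r" "\<beta> \<subseteq> {0..<n}"
  shows "submatrix F \<beta> UNIV \<in> carrier_mat (card \<beta>) r"
proof -
  have "{i. i < n \<and> i \<in> \<beta>} = \<beta>" using assms(2) by auto
  then show ?thesis using assms(1) unfolding submatrix_def by auto
qed

lemma submatrix_cols_carrier:
  assumes "H \<in> carrier_mat r n" "\<beta> \<subseteq> {0..<n}"
  shows "submatrix H UNIV \<beta> \<in> carrier_mat r (card \<beta>)"
proof -
  have "{i. i < n \<and> i \<in> \<beta>} = \<beta>" using assms(2) by auto
  then show ?thesis using assms(1) unfolding submatrix_def by auto
qed

lemma submatrix_rows_index:
  assumes "F \<in> carrier_mat n r" "\<beta> \<subseteq> {0..<n}" "i < card \<beta>" "j < r"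
  shows "submatrix F \<beta> UNIV $$ (i,j) = F $$ (pick \<beta> i, j)"
proof -
  have "{i. i < n \<and> i \<in> \<beta>} = \<beta>" using assms(2) by auto
  then show ?thesis using assms unfolding submatrix_def by (auto simp: pick_UNIV)
qed

lemma submatrix_cols_index:
  assumes "H \<in> carrier_mat r n" "\<beta> \<subseteq> {0..<n}" "i < r" "j < card \<beta>"
  shows "submatrix H UNIV \<beta> $$ (i,j) = H $$ (i, pick \<beta> j)"
proof -
  have "{i. i < n \<and> i \<in> \<beta>} = \<beta>" using assms(2) by auto
  then show ?thesis using assms unfolding submatrix_def by (auto simp: pick_UNIV)
qed

lemma det_permuted_rows_submatrix:
  fixes F :: "'a::comm_ring_1 mat"
  assumes F: "F \<in> carrier_mat n r" and b: "\<beta> \<subseteq> {0..<n}" "card \<beta> = r"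
    and p: "p permutes {0..<r}"
  shows "det (mat\<^sub>r r r (\<lambda>i. row F (pick \<beta> (p i)))) = signof p * det (submatrix F \<beta> UNIV)"
proof -
  have S: "submatrix F \<beta> UNIV \<in> carrier_mat r r" using submatrix_rows_carrier[OF F b(1)] b(2) by simp
  have pr: "i < r \<Longrightarrow> p i < r" for i using permutes_in_image[OF p] by auto
  have pn: "i < r \<Longrightarrow> pick \<beta> (p i) < n" for i
    using pr pick_in_set_le[of "p i" \<beta>] b by auto
  have "mat\<^sub>r r r (\<lambda>i. row F (pick \<beta> (p i))) = mat r r (\<lambda>(i,j). submatrix F \<beta> UNIV $$ (p i, j))"
    using F b pr pn by (intro eq_matI) (auto simp: submatrix_rows_index)
  then show ?thesis using det_permute_rows[OF S p] by simp
qed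

text \<open>Injections \<open>{0..<r} \<rightarrow> {0..<n}\<close>, normalised to the identity outside \<open>{0..<r}\<close> as in the
  expansion \<open>det_linear_rows_sum\<close>.\<close>
definition idx_injections :: "nat \<Rightarrow> nat \<Rightarrow> (nat \<Rightarrow> nat) set" where
  "idx_injections r n = {f. (\<forall>i\<in>{0..<r}. f i \<in> {0..<n}) \<and> (\<forall>i. i \<notin> {0..<r} \<longrightarrow> f i = i)
     \<and> inj_on f {0..<r}}"

lemma finite_idx_injections: "finite (idx_injections r n)"
  unfolding idx_injections_def
  by (rule finite_subset[OF _ finite_bounded_functions[of "{0..<n}" "{0..<r}"]]) auto

lemma finite_idx_sets: "finite (idx_sets r n)"
  unfolding idx_sets_def by (rule finite_subset[of _ "Pow {0..<n}"]) auto

lemma det_mult_sum_idx_injections: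
  fixes H F :: "'a::comm_ring_1 mat"
  assumes H: "H \<in> carrier_mat r n" and F: "F \<in> carrier_mat n r"
  shows "det (H * F) = (\<Sum>f\<in>idx_injections r n.
    (\<Prod>i\<in>{0..<r}. H $$ (i, f i)) * det (mat\<^sub>r r r (\<lambda>i. row F (f i))))"
proof -
  let ?U = "{0..<r}"
  let ?Fs = "{f. (\<forall>i\<in>?U. f i \<in> {0..<n}) \<and> (\<forall>i. i \<notin> ?U \<longrightarrow> f i = i)}"
  define t where "t f = (\<Prod>i\<in>?U. H $$ (i, f i)) * det (mat\<^sub>r r r (\<lambda>i. row F (f i)))" for f
  have "det (H * F) = (\<Sum>f\<in>?Fs. det (mat\<^sub>r r r (\<lambda>i. H $$ (i, f i) \<cdot>\<^sub>v row F (f i))))"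
    unfolding mat_mul_finsum_alt[OF H F] by (rule det_linear_rows_sum) (use F in auto)
  also have "\<dots> = (\<Sum>f\<in>?Fs. t f)"
    unfolding t_def by (intro sum.cong refl det_rows_mul) (use F in auto)
  also have "\<dots> = (\<Sum>f\<in>idx_injections r n. t f)"
  proof (rule sum.mono_neutral_right)
    show "finite ?Fs" by (rule finite_bounded_functions) auto
    show "\<forall>f\<in>?Fs - idx_injections r n. t f = 0"
    proof
      fix f assume f: "f \<in> ?Fs - idx_injections r n"
      then obtain i j where "i \<in> ?U" "j \<in> ?U" "i \<noteq> j" "f i = f j"
        unfolding idx_injections_def inj_on_def by auto
      then have "det (mat\<^sub>r r r (\<lambda>i. row F (f i))) = 0"
        using f F by (intro det_identical_rows[of _ r i j]) auto
      then show "t f = 0" unfolding t_def by simp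
    qed
  qed (auto simp: idx_injections_def)
  finally show ?thesis unfolding t_def .
qed

lemma index_of_injection_permutes:
  assumes b: "\<beta> \<subseteq> {0..<n}" "card \<beta> = r" and f: "f \<in> idx_injections r n" "f ` {0..<r} = \<beta>"
  shows "(\<lambda>i. if i < r then card {a\<in>\<beta>. a < f i} else i) permutes {0..<r}"
proof -
  let ?U = "{0..<r}"
  have "finite \<beta>" using b(1) finite_subset by blast
  have "bij_betw f ?U \<beta>" using f unfolding idx_injections_def bij_betw_def by auto
  then have "bij_betw ((\<lambda>a. card {x\<in>\<beta>. x < a}) \<circ> f) ?U ?U"
    using bij_betw_pick(2)[OF \<open>finite \<beta>\<close> b(2)] by (rule bij_betw_trans)
  moreover have "bij_betw ((\<lambda>a. card {x\<in>\<beta>. x < a}) \<circ> f) ?U ?U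
    = bij_betw (\<lambda>i. if i < r then card {a\<in>\<beta>. a < f i} else i) ?U ?U"
    by (rule bij_betw_cong) auto
  ultimately show ?thesis by (intro bij_imp_permutes) auto
qed

lemma bij_betw_permutes_idx_injections:
  assumes b: "\<beta> \<subseteq> {0..<n}" "card \<beta> = r"
  shows "bij_betw (\<lambda>p i. if i < r then pick \<beta> (p i) else i) {p. p permutes {0..<r}}
    {f\<in>idx_injections r n. f ` {0..<r} = \<beta>}"
proof (rule bij_betw_byWitness[where f' = "\<lambda>f i. if i < r then card {a\<in>\<beta>. a < f i} else i"])
  let ?U = "{0..<r}"
  have fb: "finite \<beta>" using b(1) finite_subset by blast
  show "\<forall>p\<in>{p. p permutes ?U}. (\<lambda>i. if i < r then card {a\<in>\<beta>. a < (if i < r then pick \<beta> (p i) else i)} else i) = p"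
  proof (intro ballI ext)
    fix p i assume p: "p \<in> {p. p permutes ?U}"
    then show "(if i < r then card {a\<in>\<beta>. a < (if i < r then pick \<beta> (p i) else i)} else i) = p i"
      using permutes_in_image[of p ?U i] permutes_not_in[of p ?U i] card_pick_le[of "p i" \<beta>] b(2)
      by auto
  qed
  show "\<forall>f\<in>{f\<in>idx_injections r n. f ` ?U = \<beta>}. (\<lambda>i. if i < r then pick \<beta> (if i < r then card {a\<in>\<beta>. a < f i} else i) else i) = f"
  proof (intro ballI ext)
    fix f i assume f: "f \<in> {f\<in>idx_injections r n. f ` ?U = \<beta>}"
    then show "(if i < r then pick \<beta> (if i < r then card {a\<in>\<beta>. a < f i} else i) else i) = f i"
      using pick_card_in_set[of "f i" \<beta>] unfolding idx_injections_def by auto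
  qed
  show "(\<lambda>p i. if i < r then pick \<beta> (p i) else i) ` {p. p permutes ?U} \<subseteq> {f\<in>idx_injections r n. f ` ?U = \<beta>}"
  proof clarify
    fix p assume p: "p permutes ?U"
    note pick = bij_betw_pick(1)[OF fb b(2)]
    have "(\<lambda>i. if i < r then pick \<beta> (p i) else i) ` ?U = pick \<beta> ` (p ` ?U)" by auto
    also have "\<dots> = \<beta>" using permutes_image[OF p] bij_betw_imp_surj_on[OF pick] by simp
    finally have im: "(\<lambda>i. if i < r then pick \<beta> (p i) else i) ` ?U = \<beta>" .
    have "inj_on (pick \<beta> \<circ> p) ?U"
      using bij_betw_trans[OF permutes_imp_bij[OF p] pick] bij_betw_imp_inj_on by blast
    then have "inj_on (\<lambda>i. if i < r then pick \<beta> (p i) else i) ?U" by (auto simp: inj_on_def)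
    then show "(\<lambda>i. if i < r then pick \<beta> (p i) else i) \<in> idx_injections r n \<and>
      (\<lambda>i. if i < r then pick \<beta> (p i) else i) ` ?U = \<beta>"
      using im b(1) unfolding idx_injections_def by force
  qed
  show "(\<lambda>f i. if i < r then card {a\<in>\<beta>. a < f i} else i) ` {f\<in>idx_injections r n. f ` ?U = \<beta>}
    \<subseteq> {p. p permutes ?U}"
    using index_of_injection_permutes[OF b] by blast
qed

lemma sum_idx_injections_onto:
  fixes H F :: "'a::comm_ring_1 mat"
  assumes H: "H \<in> carrier_mat r n" and F: "F \<in> carrier_mat n r"
    and b: "\<beta> \<subseteq> {0..<n}" "card \<beta> = r"
  shows "(\<Sum>f\<in>{f\<in>idx_injections r n. f ` {0..<r} = \<beta>}.
      (\<Prod>i\<in>{0..<r}. H $$ (i, f i)) * det (mat\<^sub>r r r (\<lambda>i. row F (f i))))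
    = det (submatrix H UNIV \<beta>) * det (submatrix F \<beta> UNIV)"
proof -
  let ?U = "{0..<r}" and ?P = "{p. p permutes {0..<r}}"
  define t where "t f = (\<Prod>i\<in>?U. H $$ (i, f i)) * det (mat\<^sub>r r r (\<lambda>i. row F (f i)))" for f
  define g where "g p = (\<lambda>i. if i < r then pick \<beta> (p i) else i)" for p :: "nat \<Rightarrow> nat"
  have HS: "submatrix H UNIV \<beta> \<in> carrier_mat r r" using submatrix_cols_carrier[OF H b(1)] b(2) by simp
  have pr: "p \<in> ?P \<Longrightarrow> i < r \<Longrightarrow> p i < r" for p i using permutes_in_image[of p ?U] by auto
  have "det (submatrix H UNIV \<beta>) = (\<Sum>p\<in>?P. signof p * (\<Prod>i\<in>?U. H $$ (i, pick \<beta> (p i))))"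
    unfolding det_def'[OF HS] using submatrix_cols_index[OF H b(1)] b(2) pr
    by (intro sum.cong refl) auto
  then have "det (submatrix H UNIV \<beta>) * det (submatrix F \<beta> UNIV)
      = (\<Sum>p\<in>?P. (\<Prod>i\<in>?U. H $$ (i, pick \<beta> (p i))) * (signof p * det (submatrix F \<beta> UNIV)))"
    by (simp only: sum_distrib_right) (auto intro: sum.cong simp: ac_simps)
  also have "\<dots> = (\<Sum>p\<in>?P. t (g p))"
  proof (rule sum.cong[OF refl])
    fix p assume p: "p \<in> ?P"
    have rows: "mat\<^sub>r r r (\<lambda>i. row F (g p i)) = mat\<^sub>r r r (\<lambda>i. row F (pick \<beta> (p i)))"
      by (rule eq_rowI) (auto simp: g_def)
    have "(\<Prod>i\<in>?U. H $$ (i, g p i)) = (\<Prod>i\<in>?U. H $$ (i, pick \<beta> (p i)))"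
      by (rule prod.cong) (auto simp: g_def)
    then show "(\<Prod>i\<in>?U. H $$ (i, pick \<beta> (p i))) * (signof p * det (submatrix F \<beta> UNIV)) = t (g p)"
      using det_permuted_rows_submatrix[OF F b] p unfolding t_def rows by simp
  qed
  also have "\<dots> = (\<Sum>f\<in>{f\<in>idx_injections r n. f ` ?U = \<beta>}. t f)"
    using bij_betw_permutes_idx_injections[OF b] unfolding g_def[abs_def]
    by (rule sum.reindex_bij_betw)
  finally show ?thesis unfolding t_def by simp
qed

lemma cauchy_binet:
  fixes H F :: "'a::comm_ring_1 mat"
  assumes H: "H \<in> carrier_mat r n" and F: "F \<in> carrier_mat n r"
  shows "det (H * F) = (\<Sum>\<beta>\<in>idx_sets r n. det (submatrix H UNIV \<beta>) * det (submatrix F \<beta> UNIV))"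
proof -
  define t where "t f = (\<Prod>i\<in>{0..<r}. H $$ (i, f i)) * det (mat\<^sub>r r r (\<lambda>i. row F (f i)))" for f
  have img: "(\<lambda>f. f ` {0..<r}) ` idx_injections r n \<subseteq> idx_sets r n"
    unfolding idx_injections_def idx_sets_def by (auto simp: card_image)
  have "det (H * F) = (\<Sum>f\<in>idx_injections r n. t f)"
    unfolding t_def by (rule det_mult_sum_idx_injections[OF H F])
  also have "\<dots> = (\<Sum>\<beta>\<in>idx_sets r n. \<Sum>f\<in>{f\<in>idx_injections r n. f ` {0..<r} = \<beta>}. t f)"
    by (rule sum.group[OF finite_idx_injections finite_idx_sets img, symmetric])
  also have "\<dots> = (\<Sum>\<beta>\<in>idx_sets r n. det (submatrix H UNIV \<beta>) * det (submatrix F \<beta> UNIV))"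
    unfolding t_def by (intro sum.cong refl sum_idx_injections_onto[OF H F]) (auto simp: idx_sets_def)
  finally show ?thesis .
qed

section \<open>The matrix determinant lemma\<close>

definition outer_mat :: "'a::times vec \<Rightarrow> 'a vec \<Rightarrow> 'a mat" where
  "outer_mat x y = mat (dim_vec x) (dim_vec y) (\<lambda>(p,q). x $ p * y $ q)"

lemma outer_mat_carrier [simp]:
  "x \<in> carrier_vec n \<Longrightarrow> y \<in> carrier_vec m \<Longrightarrow> outer_mat x y \<in> carrier_mat n m"
  unfolding outer_mat_def by simp

lemma mult_outer_mat:
  fixes K :: "'a::comm_semiring_0 mat"
  assumes K: "K \<in> carrier_mat n r" and x: "x \<in> carrier_vec r" and y: "y \<in> carrier_vec m"
  shows "K * outer_mat x y = outer_mat (K *\<^sub>v x) y"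
proof (rule eq_matI)
  fix p q assume "p < dim_row (outer_mat (K *\<^sub>v x) y)" "q < dim_col (outer_mat (K *\<^sub>v x) y)"
  then have pq: "p < n" "q < m" using K y unfolding outer_mat_def by auto
  have "(K * outer_mat x y) $$ (p,q) = (\<Sum>l = 0..<r. K $$ (p,l) * (x $ l * y $ q))"
    using K x y pq by (simp add: outer_mat_def scalar_prod_def)
  also have "\<dots> = (\<Sum>l = 0..<r. K $$ (p,l) * x $ l) * y $ q"
    by (simp add: sum_distrib_right mult.assoc)
  finally show "(K * outer_mat x y) $$ (p,q) = outer_mat (K *\<^sub>v x) y $$ (p,q)"
    using K x y pq by (simp add: outer_mat_def scalar_prod_def)
qed (use K x y in \<open>auto simp: outer_mat_def\<close>)

text \<open>Both block factorisations of \<open>[[1, -f\<^sup>T], [y, 1]]\<close> are used: the lower-upper one has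
  determinant \<open>det (1 + y f\<^sup>T)\<close>, the upper-lower one \<open>1 + f \<bullet> y\<close>.\<close>
lemma det_one_add_outer_mat:
  fixes y f :: "'a::idom vec"
  assumes y: "y \<in> carrier_vec r" and f: "f \<in> carrier_vec r"
  shows "det (1\<^sub>m r + outer_mat y f) = 1 + f \<bullet> y"
proof -
  define fr where "fr = mat 1 r (\<lambda>(_,q). - f $ q)"
  define yc where "yc = mat r 1 (\<lambda>(p,_). y $ p)"
  define a where "a = (mat 1 1 (\<lambda>_. 1 + f \<bullet> y) :: 'a mat)"
  define N where "N = 1\<^sub>m r + outer_mat y f"
  define M where "M = four_block_mat (1\<^sub>m 1) fr yc (1\<^sub>m r)"
  have fr: "fr \<in> carrier_mat 1 r" and yc: "yc \<in> carrier_mat r 1" and a: "a \<in> carrier_mat 1 1"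
    and N: "N \<in> carrier_mat r r"
    unfolding fr_def yc_def a_def N_def using y f by auto
  have yc_fr: "yc * fr + 1\<^sub>m r * N = 1\<^sub>m r"
    using y f by (intro eq_matI) (auto simp: yc_def fr_def N_def outer_mat_def scalar_prod_def)
  have fr_yc: "a * 1\<^sub>m 1 + fr * yc = 1\<^sub>m 1"
    using y f by (intro eq_matI) (auto simp: yc_def fr_def a_def scalar_prod_def sum_negf)
  have L: "four_block_mat (1\<^sub>m 1) (0\<^sub>m 1 r) yc (1\<^sub>m r) \<in> carrier_mat (1 + r) (1 + r)"
    and U: "four_block_mat (1\<^sub>m 1) fr (0\<^sub>m r 1) N \<in> carrier_mat (1 + r) (1 + r)"
    and U': "four_block_mat a fr (0\<^sub>m r 1) (1\<^sub>m r) \<in> carrier_mat (1 + r) (1 + r)"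
    using fr yc a N by (auto intro: four_block_carrier_mat)
  have detL: "det (four_block_mat (1\<^sub>m 1) (0\<^sub>m 1 r) yc (1\<^sub>m r)) = 1"
    using yc by (subst det_four_block_mat_upper_right_zero) auto
  have "M = four_block_mat (1\<^sub>m 1) (0\<^sub>m 1 r) yc (1\<^sub>m r) * four_block_mat (1\<^sub>m 1) fr (0\<^sub>m r 1) N"
    unfolding M_def using fr yc N yc_fr by (subst mult_four_block_mat) auto
  then have "det M = det (four_block_mat (1\<^sub>m 1) fr (0\<^sub>m r 1) N)"
    using det_mult[OF L U] detL by simp
  also have "\<dots> = det N" using fr N by (subst det_four_block_mat_lower_left_zero) auto
  finally have det_N: "det M = det N" .
  have "M = four_block_mat a fr (0\<^sub>m r 1) (1\<^sub>m r) * four_block_mat (1\<^sub>m 1) (0\<^sub>m 1 r) yc (1\<^sub>m r)"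
    unfolding M_def using fr yc a fr_yc by (subst mult_four_block_mat) auto
  then have "det M = det (four_block_mat a fr (0\<^sub>m r 1) (1\<^sub>m r))"
    using det_mult[OF U' L] detL by simp
  also have "\<dots> = 1 + f \<bullet> y"
    using fr a by (subst det_four_block_mat_lower_left_zero) (auto simp: det_single a_def)
  finally show ?thesis using det_N unfolding N_def by simp
qed

lemma det_add_outer_mat:
  fixes K Ki :: "'a::idom mat"
  assumes K: "K \<in> carrier_mat r r" and Ki: "Ki \<in> carrier_mat r r" and KKi: "K * Ki = 1\<^sub>m r"
    and x: "x \<in> carrier_vec r" and f: "f \<in> carrier_vec r"
  shows "det (K + outer_mat x f) = det K * (1 + f \<bullet> (Ki *\<^sub>v x))"
proof -
  have Kix: "Ki *\<^sub>v x \<in> carrier_vec r" using Ki x by simp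
  have KKix: "K *\<^sub>v (Ki *\<^sub>v x) = x" using K Ki x KKi by (metis assoc_mult_mat_vec one_mult_mat_vec)
  have "K * (1\<^sub>m r + outer_mat (Ki *\<^sub>v x) f) = K * 1\<^sub>m r + K * outer_mat (Ki *\<^sub>v x) f"
    by (rule mult_add_distrib_mat) (use K Kix f in auto)
  also have "\<dots> = K + outer_mat x f" using K Kix f KKix by (simp add: mult_outer_mat)
  finally show ?thesis
    using K Kix f by (metis det_mult det_one_add_outer_mat one_carrier_mat add_carrier_mat outer_mat_carrier)
qed

lemma det_add_outer_mat_diff:
  fixes K Ki :: "'a::idom mat"
  assumes K: "K \<in> carrier_mat r r" and Ki: "Ki \<in> carrier_mat r r" and KKi: "K * Ki = 1\<^sub>m r"
    and w: "w \<in> carrier_vec r" and g: "g \<in> carrier_vec r" and f: "f \<in> carrier_vec r"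
  shows "det (K + outer_mat (w - g) f) - det (K + outer_mat (0\<^sub>v r - g) f) = det K * (f \<bullet> (Ki *\<^sub>v w))"
proof -
  have "Ki *\<^sub>v (0\<^sub>v r - g) = - (Ki *\<^sub>v g)"
    using Ki g by (intro eq_vecI) (auto simp: scalar_prod_def sum_negf)
  then have "f \<bullet> (Ki *\<^sub>v (0\<^sub>v r - g)) = - (f \<bullet> (Ki *\<^sub>v g))" using f Ki by simp
  moreover have "f \<bullet> (Ki *\<^sub>v (w - g)) = f \<bullet> (Ki *\<^sub>v w) - f \<bullet> (Ki *\<^sub>v g)"
    using mult_minus_distrib_mat_vec[OF Ki w g] f Ki w g by (simp add: scalar_prod_minus_distrib[of _ r])
  ultimately have "det (K + outer_mat (w - g) f) = det K * (1 + (f \<bullet> (Ki *\<^sub>v w) - f \<bullet> (Ki *\<^sub>v g)))"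
    and "det (K + outer_mat (0\<^sub>v r - g) f) = det K * (1 + - (f \<bullet> (Ki *\<^sub>v g)))"
    by (subst det_add_outer_mat[OF K Ki KKi _ f]; use w g in auto)+
  then show ?thesis by (simp only:) (simp add: algebra_simps)
qed

section \<open>Sums of principal minors\<close>

lemma principal_sub_mult:
  fixes F G :: "'a::comm_ring_1 mat"
  assumes F: "F \<in> carrier_mat n r" and G: "G \<in> carrier_mat r n" and b: "\<beta> \<subseteq> {0..<n}"
  shows "principal_sub (F * G) \<beta> = submatrix F \<beta> UNIV * submatrix G UNIV \<beta>"
proof -
  have Fb: "submatrix F \<beta> UNIV \<in> carrier_mat (card \<beta>) r" by (rule submatrix_rows_carrier[OF F b])
  have Gb: "submatrix G UNIV \<beta> \<in> carrier_mat r (card \<beta>)" by (rule submatrix_cols_carrier[OF G b])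
  have nb: "{i. i < n \<and> i \<in> \<beta>} = \<beta>" using b by auto
  show ?thesis
  proof (rule eq_matI)
    fix i j assume "i < dim_row (submatrix F \<beta> UNIV * submatrix G UNIV \<beta>)"
      "j < dim_col (submatrix F \<beta> UNIV * submatrix G UNIV \<beta>)"
    then have ij: "i < card \<beta>" "j < card \<beta>" using Fb Gb by auto
    have pi: "pick \<beta> i < n" "pick \<beta> j < n" using pick_in_set_le[OF ij(1)] pick_in_set_le[OF ij(2)] b by auto
    have "principal_sub (F * G) \<beta> $$ (i,j) = (\<Sum>l = 0..<r. F $$ (pick \<beta> i, l) * G $$ (l, pick \<beta> j))"
      unfolding principal_sub_def using submatrix_index[of i "F * G" \<beta> j \<beta>] F G nb ij pi
      by (simp add: scalar_prod_def)
    also have "\<dots> = (submatrix F \<beta> UNIV * submatrix G UNIV \<beta>) $$ (i,j)"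
      using submatrix_rows_index[OF F b ij(1)] submatrix_cols_index[OF G b _ ij(2)] Fb Gb ij
      by (simp add: scalar_prod_def)
    finally show "principal_sub (F * G) \<beta> $$ (i, j) = (submatrix F \<beta> UNIV * submatrix G UNIV \<beta>) $$ (i, j)" .
  qed (use F G Fb Gb nb in \<open>auto simp: principal_sub_def submatrix_def\<close>)
qed

lemma sum_principal_minors_mult:
  fixes F G :: "'a::comm_ring_1 mat"
  assumes F: "F \<in> carrier_mat n r" and G: "G \<in> carrier_mat r n"
  shows "(\<Sum>\<beta>\<in>idx_sets r n. det (principal_sub (F * G) \<beta>)) = det (G * F)"
proof -
  have "det (principal_sub (F * G) \<beta>) = det (submatrix G UNIV \<beta>) * det (submatrix F \<beta> UNIV)"
    if "\<beta> \<in> idx_sets r n" for \<beta>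
  proof -
    have b: "\<beta> \<subseteq> {0..<n}" "card \<beta> = r" using that unfolding idx_sets_def by auto
    then show ?thesis
      using submatrix_rows_carrier[OF F b(1)] submatrix_cols_carrier[OF G b(1)]
      by (simp add: principal_sub_mult[OF F G b(1)] det_mult[of _ r])
  qed
  then show ?thesis using cauchy_binet[OF G F] by simp
qed

lemma submatrix_cols_cong:
  assumes H: "H \<in> carrier_mat r n" and H': "H' \<in> carrier_mat r n" and b: "\<beta> \<subseteq> {0..<n}"
    and eq: "\<And>q l. q < r \<Longrightarrow> l \<in> \<beta> \<Longrightarrow> H' $$ (q,l) = H $$ (q,l)"
  shows "submatrix H' UNIV \<beta> = submatrix H UNIV \<beta>"
proof (rule eq_matI)
  fix i j assume "i < dim_row (submatrix H UNIV \<beta>)" "j < dim_col (submatrix H UNIV \<beta>)"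
  then have ij: "i < r" "j < card \<beta>" using submatrix_cols_carrier[OF H b] by auto
  then show "submatrix H' UNIV \<beta> $$ (i, j) = submatrix H UNIV \<beta> $$ (i, j)"
    using submatrix_cols_index[OF H b ij] submatrix_cols_index[OF H' b ij] eq pick_in_set_le[OF ij(2)]
    by simp
qed (use submatrix_cols_carrier[OF H b] submatrix_cols_carrier[OF H' b] in auto)

lemma det_submatrix_zero_col:
  fixes H :: "'a::comm_ring_1 mat"
  assumes H: "H \<in> carrier_mat r n" and b: "\<beta> \<subseteq> {0..<n}" "card \<beta> = r" and i: "i \<in> \<beta>"
    and zero: "\<And>q. q < r \<Longrightarrow> H $$ (q, i) = 0"
  shows "det (submatrix H UNIV \<beta>) = 0"
proof -
  have fb: "finite \<beta>" using b(1) finite_subset by blast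
  have S: "submatrix H UNIV \<beta> \<in> carrier_mat r r" using submatrix_cols_carrier[OF H b(1)] b(2) by simp
  define c where "c = card {a\<in>\<beta>. a < i}"
  have c: "c < r" using card_less_than_member[OF fb i] b(2) unfolding c_def by simp
  have "pick \<beta> c = i" unfolding c_def by (rule pick_card_in_set[OF i])
  then have col0: "submatrix H UNIV \<beta> $$ (q, c) = 0" if "q < r" for q
    using submatrix_cols_index[OF H b(1) that] c b(2) zero that by simp
  have "(\<Prod>j<r. submatrix H UNIV \<beta> $$ (p j, j)) = 0" if "p permutes {0..<r}" for p
    using col0 permutes_in_image[OF that, of c] c by (intro prod_zero bexI[of _ c]) auto
  then show ?thesis unfolding det_col[OF S] by simp
qed

text \<open>With \<open>H'\<close> the matrix \<open>H\<close> with column \<open>i\<close> zeroed, the Cauchy--Binet terms of \<open>det (H' F)\<close>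
  agree with those of \<open>det (H F)\<close> for the index sets avoiding \<open>i\<close> and vanish for the others.\<close>
lemma cauchy_binet_idx_sets_with:
  fixes H F :: "'a::comm_ring_1 mat"
  assumes H: "H \<in> carrier_mat r n" and F: "F \<in> carrier_mat n r" and i: "i < n"
  shows "(\<Sum>\<beta>\<in>idx_sets_with r n i. det (submatrix H UNIV \<beta>) * det (submatrix F \<beta> UNIV))
    = det (H * F) - det (replace_col H (0\<^sub>v r) i * F)"
proof -
  let ?H0 = "replace_col H (0\<^sub>v r) i"
  have H0: "?H0 \<in> carrier_mat r n" using H by (simp add: replace_col_def)
  have "det (H * F) - det (?H0 * F) = (\<Sum>\<beta>\<in>idx_sets r n.
      det (submatrix H UNIV \<beta>) * det (submatrix F \<beta> UNIV) - det (submatrix ?H0 UNIV \<beta>) * det (submatrix F \<beta> UNIV))"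
    unfolding cauchy_binet[OF H F] cauchy_binet[OF H0 F] by (simp add: sum_subtractf)
  also have "\<dots> = (\<Sum>\<beta>\<in>idx_sets_with r n i. det (submatrix H UNIV \<beta>) * det (submatrix F \<beta> UNIV))"
  proof (rule sum.mono_neutral_cong_right[OF finite_idx_sets])
    show "idx_sets_with r n i \<subseteq> idx_sets r n" unfolding idx_sets_with_def by auto
    show "\<forall>\<beta>\<in>idx_sets r n - idx_sets_with r n i. det (submatrix H UNIV \<beta>) * det (submatrix F \<beta> UNIV)
      - det (submatrix ?H0 UNIV \<beta>) * det (submatrix F \<beta> UNIV) = 0"
    proof
      fix \<beta> assume "\<beta> \<in> idx_sets r n - idx_sets_with r n i"
      then have "\<beta> \<subseteq> {0..<n}" "i \<notin> \<beta>" unfolding idx_sets_with_def idx_sets_def by auto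
      then have "submatrix ?H0 UNIV \<beta> = submatrix H UNIV \<beta>"
        using H by (intro submatrix_cols_cong[OF H H0]) (auto simp: replace_col_def)
      then show "det (submatrix H UNIV \<beta>) * det (submatrix F \<beta> UNIV)
        - det (submatrix ?H0 UNIV \<beta>) * det (submatrix F \<beta> UNIV) = 0" by simp
    qed
    show "det (submatrix H UNIV \<beta>) * det (submatrix F \<beta> UNIV) - det (submatrix ?H0 UNIV \<beta>) * det (submatrix F \<beta> UNIV)
      = det (submatrix H UNIV \<beta>) * det (submatrix F \<beta> UNIV)" if "\<beta> \<in> idx_sets_with r n i" for \<beta>
    proof -
      have "\<beta> \<subseteq> {0..<n}" "card \<beta> = r" "i \<in> \<beta>" using that unfolding idx_sets_with_def idx_sets_def by auto
      then have "det (submatrix ?H0 UNIV \<beta>) = 0"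
        by (intro det_submatrix_zero_col[OF H0]) (use H i in \<open>auto simp: replace_col_def\<close>)
      then show ?thesis by simp
    qed
  qed
  finally show ?thesis by simp
qed

section \<open>Cramer's rule for a full-rank factorisation\<close>

lemma replace_col_mult_left:
  fixes F G :: "'a::comm_ring_1 mat"
  assumes F: "F \<in> carrier_mat n r" and G: "G \<in> carrier_mat r n" and w: "w \<in> carrier_vec r" and i: "i < n"
  shows "replace_col (F * G) (F *\<^sub>v w) i = F * replace_col G w i"
proof (rule eq_matI)
  fix l q assume "l < dim_row (F * replace_col G w i)" "q < dim_col (F * replace_col G w i)"
  then have lq: "l < n" "q < n" using F G by (auto simp: replace_col_def)
  have "col (replace_col G w i) q = (if q = i then w else col G q)"
    using G w lq by (auto simp: replace_col_def)
  then show "replace_col (F * G) (F *\<^sub>v w) i $$ (l, q) = (F * replace_col G w i) $$ (l, q)"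
    using lq F G w by (auto simp: replace_col_def)
qed (use F G in \<open>auto simp: replace_col_def\<close>)

lemma replace_col_mult_right:
  fixes F G :: "'a::comm_ring_1 mat"
  assumes G: "G \<in> carrier_mat r n" and F: "F \<in> carrier_mat n r" and w: "w \<in> carrier_vec r" and i: "i < n"
  shows "replace_col G w i * F = G * F + outer_mat (w - col G i) (row F i)"
proof (rule eq_matI)
  fix p q assume "p < dim_row (G * F + outer_mat (w - col G i) (row F i))"
    "q < dim_col (G * F + outer_mat (w - col G i) (row F i))"
  then have pq: "p < r" "q < r" using G F w by (auto simp: outer_mat_def)
  have "(replace_col G w i * F) $$ (p,q) = (\<Sum>l = 0..<n. (if l = i then w $ p else G $$ (p,l)) * F $$ (l,q))"
    using G F w pq by (simp add: scalar_prod_def replace_col_def)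
  also have "\<dots> = (\<Sum>l = 0..<n. G $$ (p,l) * F $$ (l,q) + (if l = i then (w $ p - G $$ (p,l)) * F $$ (l,q) else 0))"
    by (rule sum.cong) (auto simp: algebra_simps)
  also have "\<dots> = (\<Sum>l = 0..<n. G $$ (p,l) * F $$ (l,q)) + (w $ p - G $$ (p,i)) * F $$ (i,q)"
    using i by (simp add: sum.distrib)
  finally show "(replace_col G w i * F) $$ (p,q) = (G * F + outer_mat (w - col G i) (row F i)) $$ (p,q)"
    using pq G F w i by (simp add: scalar_prod_def outer_mat_def)
qed (use G F w in \<open>auto simp: replace_col_def outer_mat_def\<close>)

lemma replace_col_replace_col [simp]: "replace_col (replace_col G w i) v i = replace_col G v i"
  by (rule eq_matI) (auto simp: replace_col_def)

text \<open>With \<open>G' = replace_col G w i\<close>, the restricted Cauchy--Binet formula turns the left-hand side into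
  \<open>det (G' F) - det (G'' F)\<close>, where \<open>G''\<close> has column \<open>i\<close> zeroed; both products are rank-one updates
  of \<open>G F\<close>, and the matrix determinant lemma leaves only the contribution of \<open>w\<close>.\<close>
lemma sum_principal_minors_replace_col:
  fixes F G Ki Q :: "'a::idom mat"
  assumes F: "F \<in> carrier_mat n r" and G: "G \<in> carrier_mat r n" and Ki: "Ki \<in> carrier_mat r r"
    and inv: "G * F * Ki = 1\<^sub>m r" and Q: "Q \<in> carrier_mat r c" and i: "i < n" and t: "t < c"
  shows "(\<Sum>\<beta>\<in>idx_sets_with r n i. det (principal_sub (replace_col (F * G) (col (F * Q) t) i) \<beta>))
    = det (G * F) * (F * Ki * Q) $$ (i,t)"
proof -
  define w where "w = col Q t"
  define G' where "G' = replace_col G w i"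
  define f where "f = row F i"
  have w: "w \<in> carrier_vec r" and G': "G' \<in> carrier_mat r n" and f: "f \<in> carrier_vec r"
    and g: "col G i \<in> carrier_vec r" and K: "G * F \<in> carrier_mat r r"
    unfolding w_def G'_def f_def using Q t G F i by (auto simp: replace_col_def)
  have "(\<Sum>\<beta>\<in>idx_sets_with r n i. det (principal_sub (replace_col (F * G) (col (F * Q) t) i) \<beta>))
     = (\<Sum>\<beta>\<in>idx_sets_with r n i. det (submatrix G' UNIV \<beta>) * det (submatrix F \<beta> UNIV))"
  proof (rule sum.cong[OF refl])
    fix \<beta> assume "\<beta> \<in> idx_sets_with r n i"
    then have b: "\<beta> \<subseteq> {0..<n}" "card \<beta> = r" unfolding idx_sets_with_def idx_sets_def by auto
    have "replace_col (F * G) (col (F * Q) t) i = F * G'"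
      unfolding G'_def col_mult2[OF F Q t] w_def[symmetric] by (rule replace_col_mult_left[OF F G w i])
    then show "det (principal_sub (replace_col (F * G) (col (F * Q) t) i) \<beta>)
      = det (submatrix G' UNIV \<beta>) * det (submatrix F \<beta> UNIV)"
      using submatrix_rows_carrier[OF F b(1)] submatrix_cols_carrier[OF G' b(1)] b(2)
      by (simp add: principal_sub_mult[OF F G' b(1)] det_mult[of _ r])
  qed
  also have "\<dots> = det (G * F + outer_mat (w - col G i) f) - det (G * F + outer_mat (0\<^sub>v r - col G i) f)"
    unfolding cauchy_binet_idx_sets_with[OF G' F i] unfolding G'_def f_def
    by (simp add: replace_col_mult_right[OF G F _ i] w)
  also have "\<dots> = det (G * F) * (f \<bullet> (Ki *\<^sub>v w))"
    by (rule det_add_outer_mat_diff[OF K Ki inv w g f])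
  also have "f \<bullet> (Ki *\<^sub>v w) = (F * Ki * Q) $$ (i,t)"
    unfolding f_def w_def assoc_mult_mat[OF F Ki Q] col_mult2[OF Ki Q t, symmetric]
    using F Ki Q i t by simp
  finally show ?thesis .
qed

lemma det_principal_sub_transpose:
  assumes N: "N \<in> carrier_mat n n"
  shows "det (principal_sub (transpose_mat N) \<alpha>) = det (principal_sub N \<alpha>)"
proof -
  have "principal_sub (transpose_mat N) \<alpha> = transpose_mat (principal_sub N \<alpha>)"
    using N unfolding principal_sub_def submatrix_def by (auto intro!: eq_matI simp: pick_le)
  moreover have "principal_sub N \<alpha> \<in> carrier_mat (card {i. i < n \<and> i \<in> \<alpha>}) (card {i. i < n \<and> i \<in> \<alpha>})"
    using N unfolding principal_sub_def submatrix_def by auto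
  ultimately show ?thesis using det_transpose by metis
qed

lemma sum_principal_minors_replace_row:
  fixes F G Ki P :: "'a::field mat"
  assumes F: "F \<in> carrier_mat n r" and G: "G \<in> carrier_mat r n" and Ki: "Ki \<in> carrier_mat r r"
    and inv: "G * F * Ki = 1\<^sub>m r" and P: "P \<in> carrier_mat c r" and l: "l < c" and j: "j < n"
  shows "(\<Sum>\<alpha>\<in>idx_sets_with r n j. det (principal_sub (replace_row (F * G) (row (P * G) l) j) \<alpha>))
    = det (G * F) * (P * Ki * G) $$ (l,j)"
proof -
  let ?T = transpose_mat
  have GF: "G * F \<in> carrier_mat r r" using G F by simp
  have "?T (Ki * (G * F)) = ?T F * ?T G * ?T Ki"
    using transpose_mult[OF Ki GF] transpose_mult[OF G F] by simp
  then have inv': "?T F * ?T G * ?T Ki = 1\<^sub>m r"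
    using mat_mult_left_right_inverse[OF GF Ki] inv G F by (simp add: assoc_mult_mat[of _ r n])
  have "replace_row (F * G) (row (P * G) l) j = ?T (replace_col (?T G * ?T F) (col (?T G * ?T P) l) j)"
    using F G P l by (intro eq_matI) (auto simp: replace_row_def replace_col_def comm_scalar_prod[of _ r])
  then have minor: "det (principal_sub (replace_row (F * G) (row (P * G) l) j) \<alpha>)
    = det (principal_sub (replace_col (?T G * ?T F) (col (?T G * ?T P) l) j) \<alpha>)" for \<alpha>
    using F G by (simp add: det_principal_sub_transpose[of _ n] replace_col_def)
  have "(\<Sum>\<alpha>\<in>idx_sets_with r n j. det (principal_sub (replace_row (F * G) (row (P * G) l) j) \<alpha>))
    = (\<Sum>\<alpha>\<in>idx_sets_with r n j. det (principal_sub (replace_col (?T G * ?T F) (col (?T G * ?T P) l) j) \<alpha>))"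
    by (rule sum.cong[OF refl minor])
  also have "\<dots> = det (?T F * ?T G) * (?T G * ?T Ki * ?T P) $$ (j,l)"
    using F G Ki P l j by (intro sum_principal_minors_replace_col[OF _ _ _ inv']) auto
  also have "?T G * ?T Ki * ?T P = ?T (P * Ki * G)"
  proof -
    have "P * Ki \<in> carrier_mat c r" using P Ki by simp
    then show ?thesis using transpose_mult[OF P Ki] transpose_mult[of "P * Ki" c r G n] G Ki P
      by (simp add: assoc_mult_mat[of _ n r _ r _ c])
  qed
  also have "det (?T F * ?T G) = det (G * F)"
    using det_transpose[OF GF] transpose_mult[OF G F] by simp
  also have "?T (P * Ki * G) $$ (j,l) = (P * Ki * G) $$ (l,j)" using P Ki G l j by simp
  finally show ?thesis .
qed

section \<open>Full-rank factorisation of the core part and the Drazin inverse\<close>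

lemma (in vec_space) exists_basis_among_cols:
  assumes M: "M \<in> carrier_mat n nc" and N: "N \<in> carrier_mat n nc'"
    and sub: "set (cols M) \<subseteq> span (set (cols N))" and rk: "rank M = rank N"
  shows "\<exists>bs. distinct bs \<and> set bs \<subseteq> set (cols M) \<and> lin_indpt (set bs) \<and> length bs = rank N
     \<and> set (cols N) \<subseteq> span (set bs)"
proof -
  let ?P = "\<lambda>T. T \<subseteq> set (cols M) \<and> lin_indpt T"
  have "lin_indpt {}"
    by (metis (no_types) empty_subsetI fin_dim finite_basis_exists subset_li_is_li vec_vs vectorspace.basis_def)
  then obtain S where fS: "finite S" and max: "maximal S ?P"
    using maximal_exists_superset[of "set (cols M)" ?P "{}"] by auto
  have cS: "card S = rank M" using rank_card_indpt[OF M max] by simp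
  have SM: "S \<subseteq> set (cols M)" and liS: "lin_indpt S" using max unfolding maximal_def by auto
  let ?W = "span (set (cols N))"
  have cN: "set (cols N) \<subseteq> carrier_vec n" using N cols_dim by blast
  have subW: "VectorSpace.subspace class_ring ?W V" using span_is_subspace[of "set (cols N)"] cN by simp
  have submW: "submodule class_ring ?W V" using span_is_submodule[of "set (cols N)"] cN by simp
  have vsW: "vectorspace class_ring (vs ?W)" by (rule subspace_is_vs[OF subW])
  have fdW: "vectorspace.fin_dim class_ring (vs ?W)" by (rule fin_dim_span_cols[OF N])
  have dimW: "vectorspace.dim class_ring (vs ?W) = rank N" unfolding rank_def by simp
  have SW: "S \<subseteq> ?W" using SM sub by auto
  have liW: "LinearCombinations.module.lin_indpt class_ring (vs ?W) S"
    using span_li_not_depend(2)[OF SW submW] liS by simp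
  have "vectorspace.basis class_ring (vs ?W) S"
    by (rule vectorspace.dim_li_is_basis[OF vsW fdW fS], insert SW liW cS rk dimW, auto)
  hence "LinearCombinations.module.span class_ring (vs ?W) S = ?W"
    unfolding vectorspace.basis_def[OF vsW] by simp
  hence spanS: "span S = ?W" using span_li_not_depend(1)[OF SW submW] by simp
  obtain bs where bs: "set bs = S" "distinct bs" using finite_distinct_list[OF fS] by blast
  have "length bs = rank N" using bs cS rk distinct_card by metis
  moreover have "set (cols N) \<subseteq> span (set bs)" unfolding bs(1) spanS using in_own_span[OF cN] .
  ultimately show ?thesis using bs SM liS by blast
qed

lemma exists_factor_cols_in_range:
  fixes F N :: "'a::comm_semiring_0 mat"
  assumes F: "F \<in> carrier_mat n r" and N: "N \<in> carrier_mat n m"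
    and range: "\<And>l. l < m \<Longrightarrow> \<exists>x. x \<in> carrier_vec r \<and> F *\<^sub>v x = col N l"
  shows "\<exists>W. W \<in> carrier_mat r m \<and> N = F * W"
proof -
  obtain xf where xf: "\<And>l. l < m \<Longrightarrow> xf l \<in> carrier_vec r \<and> F *\<^sub>v xf l = col N l"
    using range by metis
  define W where "W = mat r m (\<lambda>(a,l). xf l $ a)"
  have "N = F * W"
  proof (rule eq_matI)
    fix i l assume "i < dim_row (F * W)" "l < dim_col (F * W)"
    then have il: "i < n" "l < m" using F by (auto simp: W_def)
    have "col W l = xf l" using xf[OF il(2)] il(2) unfolding W_def by (intro eq_vecI) auto
    then have "(F * W) $$ (i,l) = (F *\<^sub>v xf l) $ i" using il F by (simp add: W_def)
    then show "N $$ (i, l) = (F * W) $$ (i, l)" using xf[OF il(2)] il N by simp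
  qed (use N F in \<open>auto simp: W_def\<close>)
  moreover have "W \<in> carrier_mat r m" unfolding W_def by simp
  ultimately show ?thesis by blast
qed

lemma mat_of_cols_selection:
  fixes M :: "'a::comm_semiring_1 mat"
  assumes M: "M \<in> carrier_mat n m" and bs: "set bs \<subseteq> set (cols M)"
  shows "\<exists>Z. Z \<in> carrier_mat m (length bs) \<and> mat_of_cols n bs = M * Z"
proof -
  have "\<forall>q<length bs. \<exists>j. j < m \<and> bs ! q = col M j"
  proof (intro allI impI)
    fix q assume "q < length bs"
    then have "bs ! q \<in> set (cols M)" using bs by auto
    then show "\<exists>j. j < m \<and> bs ! q = col M j" using M by (auto simp: in_set_conv_nth)
  qed
  then obtain jf where jf: "\<And>q. q < length bs \<Longrightarrow> jf q < m \<and> bs ! q = col M (jf q)" by metis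
  define Z where "Z = (mat m (length bs) (\<lambda>(j,q). if j = jf q then 1 else 0) :: 'a mat)"
  have "mat_of_cols n bs = M * Z"
  proof (rule eq_matI)
    fix i q assume "i < dim_row (M * Z)" "q < dim_col (M * Z)"
    then have iq: "i < n" "q < length bs" using M by (auto simp: Z_def)
    have "col Z q = unit_vec m (jf q)" using jf[OF iq(2)] iq(2) unfolding Z_def
      by (intro eq_vecI) (auto simp: unit_vec_def)
    then have "(M * Z) $$ (i,q) = (M *\<^sub>v unit_vec m (jf q)) $ i" using iq M by (simp add: Z_def)
    also have "\<dots> = M $$ (i, jf q)" using M jf[OF iq(2)] iq(1) by simp
    finally show "mat_of_cols n bs $$ (i, q) = (M * Z) $$ (i, q)"
      using jf[OF iq(2)] M iq by (simp add: mat_of_cols_index)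
  qed (use M in \<open>auto simp: Z_def\<close>)
  moreover have "Z \<in> carrier_mat m (length bs)" unfolding Z_def by simp
  ultimately show ?thesis by blast
qed

text \<open>The columns of \<open>F\<close> are a basis of the column space of \<open>A\<^sup>k\<close> chosen among the columns of
  \<open>A\<^sup>k\<^sup>+\<^sup>1\<close>, which is possible because both spaces have the same dimension.\<close>
lemma pow_full_rank_factorization:
  fixes A :: "'a::field mat"
  assumes A: "A \<in> carrier_mat n n" and rk: "mrank (A ^\<^sub>m (k+1)) = mrank (A ^\<^sub>m k)"
  defines "r \<equiv> mrank (A ^\<^sub>m k)"
  shows "\<exists>F W Z. F \<in> carrier_mat n r \<and> W \<in> carrier_mat r n \<and> Z \<in> carrier_mat n r
    \<and> A ^\<^sub>m k = F * W \<and> F = A ^\<^sub>m (k+1) * Z \<and> (\<forall>v \<in> carrier_vec r. F *\<^sub>v v = 0\<^sub>v n \<longrightarrow> v = 0\<^sub>v r)"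
proof -
  interpret vec_space "TYPE('a)" n .
  define M where "M = A ^\<^sub>m (k+1)"
  define N where "N = A ^\<^sub>m k"
  have M: "M \<in> carrier_mat n n" and N: "N \<in> carrier_mat n n" unfolding M_def N_def using A by auto
  have rM: "mrank M = rank M" "mrank N = rank N" unfolding mrank_def using M N by auto
  have sub: "set (cols M) \<subseteq> span (set (cols N))"
  proof
    fix c assume "c \<in> set (cols M)"
    then obtain j where j: "j < n" "c = col M j" using M by (auto simp: in_set_conv_nth)
    then have "c = N *\<^sub>v col A j" using col_mult2[OF N A j(1)] unfolding M_def N_def by simp
    then have "c \<in> col_space N" unfolding col_space_eq[OF N] using A N j by auto
    then show "c \<in> span (set (cols N))" unfolding col_space_def .
  qed
  obtain bs where bs: "distinct bs" "set bs \<subseteq> set (cols M)" "lin_indpt (set bs)" "length bs = r"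
     "set (cols N) \<subseteq> span (set bs)"
    using exists_basis_among_cols[OF M N sub] rk rM unfolding M_def N_def r_def by auto
  define F where "F = mat_of_cols n bs"
  have F: "F \<in> carrier_mat n r" unfolding F_def using mat_of_cols_carrier(1)[of n bs] bs(4) by simp
  have cF: "cols F = bs" unfolding F_def using bs(2) M cols_dim by (intro cols_mat_of_cols) blast
  have "\<exists>x. x \<in> carrier_vec r \<and> F *\<^sub>v x = col N l" if "l < n" for l
  proof -
    have "col N l \<in> col_space F" using that bs(5) N unfolding col_space_def cF by (auto simp: cols_def)
    then show ?thesis unfolding col_space_eq[OF F] using F by auto
  qed
  then obtain W where W: "W \<in> carrier_mat r n" and NFW: "N = F * W"
    using exists_factor_cols_in_range[OF F N] by blast
  obtain Z where Z: "Z \<in> carrier_mat n r" and FMZ: "F = M * Z"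
    using mat_of_cols_selection[OF M bs(2)] bs(4) unfolding F_def by blast
  have "\<forall>v \<in> carrier_vec r. F *\<^sub>v v = 0\<^sub>v n \<longrightarrow> v = 0\<^sub>v r"
  proof (intro ballI impI, rule ccontr)
    fix v assume v: "v \<in> carrier_vec r" "F *\<^sub>v v = 0\<^sub>v n" "v \<noteq> 0\<^sub>v r"
    have "lin_dep (set (cols F))" by (rule lin_depI[OF F v(1) v(3) v(2)]) (simp add: cF bs(1))
    then show False using bs(3) cF by simp
  qed
  then show ?thesis using F W Z NFW FMZ unfolding M_def N_def by blast
qed

lemma assoc_mult_mat_dims:
  "dim_col A = dim_row B \<Longrightarrow> dim_col B = dim_row C \<Longrightarrow> A * B * (C :: 'a :: semiring_0 mat) = A * (B * C)"
  by (rule assoc_mult_mat[of A "dim_row A" "dim_col A" B "dim_col B" C "dim_col C"]) auto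

lemma pow_mat_Suc_left:
  fixes A :: "'a::semiring_1 mat"
  assumes A: "A \<in> carrier_mat n n"
  shows "A ^\<^sub>m (Suc k) = A * A ^\<^sub>m k"
proof (induct k)
  case (Suc k)
  have "A ^\<^sub>m Suc (Suc k) = (A * A ^\<^sub>m k) * A" using Suc by simp
  also have "\<dots> = A * (A ^\<^sub>m k * A)" using A by (simp add: assoc_mult_mat[of _ n n _ n _ n])
  finally show ?case by simp
qed (use A in simp)

lemma pow_mat_mult_commute:
  fixes A X :: "'a::semiring_1 mat"
  assumes A: "A \<in> carrier_mat n n" and X: "X \<in> carrier_mat n n" and c: "A * X = X * A"
  shows "A ^\<^sub>m k * X = X * A ^\<^sub>m k"
proof (induct k)
  case (Suc k)
  have Ak: "A ^\<^sub>m k \<in> carrier_mat n n" using A by simp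
  have "A ^\<^sub>m Suc k * X = A ^\<^sub>m k * (A * X)" using A X Ak by (simp add: assoc_mult_mat[of _ n n _ n _ n])
  also have "\<dots> = (A ^\<^sub>m k * X) * A" using A X Ak c by (simp add: assoc_mult_mat[of _ n n _ n _ n])
  also have "\<dots> = X * A ^\<^sub>m Suc k" using A X Ak Suc by (simp add: assoc_mult_mat[of _ n n _ n _ n])
  finally show ?case .
qed (use A X in simp)

lemma pow_mat_right_inverse:
  fixes L Li :: "'a::semiring_1 mat"
  assumes L: "L \<in> carrier_mat r r" and Li: "Li \<in> carrier_mat r r" and inv: "L * Li = 1\<^sub>m r"
  shows "L ^\<^sub>m j * Li ^\<^sub>m j = 1\<^sub>m r"
proof (induct j)
  case (Suc j)
  have "L ^\<^sub>m Suc j * Li ^\<^sub>m Suc j = L * (L ^\<^sub>m j * Li ^\<^sub>m j) * Li"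
    using pow_mat_Suc_left[OF L, of j] L Li by (simp add: assoc_mult_mat_dims)
  then show ?case using Suc inv L by simp
qed (use L Li in simp)

lemma pow_mat_inverse_commute:
  fixes L Li :: "'a::field mat"
  assumes L: "L \<in> carrier_mat r r" and Li: "Li \<in> carrier_mat r r" and inv: "L * Li = 1\<^sub>m r"
  shows "L * Li ^\<^sub>m j = Li ^\<^sub>m j * L"
  using pow_mat_mult_commute[OF Li L, of j] mat_mult_left_right_inverse[OF L Li inv] inv by simp

lemma drazin_conditions_pow:
  fixes A X :: "'a::semiring_1 mat"
  assumes A: "A \<in> carrier_mat n n" and X: "X \<in> carrier_mat n n"
    and XAX: "X * A * X = X" and c: "A * X = X * A"
  shows "X ^\<^sub>m (Suc j) * A ^\<^sub>m j = X" "A ^\<^sub>m j * X ^\<^sub>m (Suc j) = X"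
proof -
  note as = assoc_mult_mat[of _ n n _ n _ n]
  have XXA: "X * X * A = X" using XAX c A X by (metis as)
  have AXX: "A * X * X = X" using XAX c A X by (metis as)
  show "X ^\<^sub>m (Suc j) * A ^\<^sub>m j = X"
  proof (induct j)
    case (Suc j)
    have "X ^\<^sub>m Suc (Suc j) * A ^\<^sub>m Suc j = X ^\<^sub>m j * (X * X * A) * A ^\<^sub>m j"
      using A X pow_mat_Suc_left[OF A, of j] by (simp add: as)
    then show ?case using Suc XXA X by simp
  qed (use X A in simp)
  show "A ^\<^sub>m j * X ^\<^sub>m (Suc j) = X"
  proof (induct j)
    case (Suc j)
    have "A ^\<^sub>m Suc j * X ^\<^sub>m Suc (Suc j) = A ^\<^sub>m j * (A * X * X) * X ^\<^sub>m j"
      using A X pow_mat_Suc_left[OF X, of j] pow_mat_Suc_left[OF X, of "Suc j"] by (simp add: as)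
    also have "\<dots> = A ^\<^sub>m j * X ^\<^sub>m (Suc j)" using AXX A X pow_mat_Suc_left[OF X, of j] by (simp add: as)
    finally show ?case using Suc by simp
  qed (use X A in simp)
qed

lemma drazin_conditions_unique:
  fixes A X Y :: "'a::semiring_1 mat"
  assumes A: "A \<in> carrier_mat n n" and X: "X \<in> carrier_mat n n" and Y: "Y \<in> carrier_mat n n"
    and X1: "A ^\<^sub>m (k+1) * X = A ^\<^sub>m k" and X2: "X * A * X = X" and X3: "A * X = X * A"
    and Y1: "A ^\<^sub>m (k+1) * Y = A ^\<^sub>m k" and Y2: "Y * A * Y = Y" and Y3: "A * Y = Y * A"
  shows "X = Y"
proof -
  note as = assoc_mult_mat[of _ n n _ n _ n]
  have P: "X ^\<^sub>m (Suc k) \<in> carrier_mat n n" "Y ^\<^sub>m (Suc k) \<in> carrier_mat n n"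
    "A ^\<^sub>m k \<in> carrier_mat n n" "A ^\<^sub>m (Suc k) \<in> carrier_mat n n" using A X Y by auto
  have "X = X ^\<^sub>m (Suc k) * A ^\<^sub>m k" using drazin_conditions_pow(1)[OF A X X2 X3] by simp
  also have "\<dots> = X ^\<^sub>m (Suc k) * (A ^\<^sub>m (Suc k) * Y)" using Y1 by simp
  also have "\<dots> = (X ^\<^sub>m (Suc k) * A ^\<^sub>m k) * A * Y" using P A Y by (simp add: as)
  also have "\<dots> = X * A * Y" using drazin_conditions_pow(1)[OF A X X2 X3] by simp
  finally have XAY: "X = X * A * Y" .
  have "Y = A ^\<^sub>m k * Y ^\<^sub>m (Suc k)" using drazin_conditions_pow(2)[OF A Y Y2 Y3] by simp
  also have "\<dots> = (X * A ^\<^sub>m (Suc k)) * Y ^\<^sub>m (Suc k)"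
    using X1 pow_mat_mult_commute[OF A X X3, of "Suc k"] by simp
  also have "\<dots> = X * A * (A ^\<^sub>m k * Y ^\<^sub>m (Suc k))"
  proof -
    have "X * A ^\<^sub>m (Suc k) = (X * A) * A ^\<^sub>m k" using pow_mat_Suc_left[OF A, of k] P A X by (simp add: as)
    moreover have "X * A \<in> carrier_mat n n" using X A by simp
    ultimately show ?thesis using P by (simp add: as)
  qed
  also have "\<dots> = X * A * Y" using drazin_conditions_pow(2)[OF A Y Y2 Y3] by simp
  finally show ?thesis using XAY by simp
qed

lemma drazin_inv_eqI:
  fixes A Y :: "'a::field mat"
  assumes A: "A \<in> carrier_mat n n" and Y: "Y \<in> carrier_mat n n"
    and "A ^\<^sub>m (mat_index A + 1) * Y = A ^\<^sub>m (mat_index A)" and "Y * A * Y = Y" and "A * Y = Y * A"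
  shows "drazin_inv A = Y"
  unfolding drazin_inv_def
  by (rule the_equality) (use assms drazin_conditions_unique[OF A _ Y] in auto)

lemma mult_left_cancel_injective:
  fixes F :: "'a::field mat"
  assumes F: "F \<in> carrier_mat n r" and inj: "\<forall>v \<in> carrier_vec r. F *\<^sub>v v = 0\<^sub>v n \<longrightarrow> v = 0\<^sub>v r"
    and X: "X \<in> carrier_mat r c" and Y: "Y \<in> carrier_mat r c" and eq: "F * X = F * Y"
  shows "X = Y"
proof (rule eq_matI)
  fix i j assume "i < dim_row Y" "j < dim_col Y"
  then have ij: "i < r" "j < c" using Y by auto
  have cx: "col X j \<in> carrier_vec r" "col Y j \<in> carrier_vec r" using X Y ij by auto
  have "F *\<^sub>v (col X j - col Y j) = col (F * X) j - col (F * Y) j"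
    unfolding mult_minus_distrib_mat_vec[OF F cx] col_mult2[OF F X ij(2)] col_mult2[OF F Y ij(2)] ..
  also have "\<dots> = 0\<^sub>v n" unfolding eq using F Y ij by (intro eq_vecI) auto
  finally have "col X j - col Y j = 0\<^sub>v r" using inj cx by auto
  then have "(col X j - col Y j) $ i = 0" using ij(1) by simp
  then show "X $$ (i, j) = Y $$ (i, j)" using cx ij X Y by simp
qed (use X Y in auto)

lemma full_rank_factorization_shift:
  fixes A F W Z :: "'a::field mat"
  assumes A: "A \<in> carrier_mat n n" and F: "F \<in> carrier_mat n r" and W: "W \<in> carrier_mat r n"
    and Z: "Z \<in> carrier_mat n r" and FW: "A ^\<^sub>m k = F * W" and FZ: "F = A ^\<^sub>m (k+1) * Z"
    and inj: "\<forall>v \<in> carrier_vec r. F *\<^sub>v v = 0\<^sub>v n \<longrightarrow> v = 0\<^sub>v r"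
  defines "L \<equiv> W * A * A * Z"
  shows "A * F = F * L" and "L * (W * Z) = 1\<^sub>m r" and "W * F = L ^\<^sub>m k" and "W * A = L * W"
    and "A ^\<^sub>m (k+1) = F * (L * W)"
proof -
  have L: "L \<in> carrier_mat r r" unfolding L_def using W A Z by (meson mult_carrier_mat)
  have dims: "dim_row A = n" "dim_col A = n" "dim_row F = n" "dim_col F = r" "dim_row W = r"
    "dim_col W = n" "dim_row Z = n" "dim_col Z = r" "dim_row L = r" "dim_col L = r"
    using A F W Z L by auto
  note sa = dims assoc_mult_mat_dims
  have cancel: "\<And>X Y c. X \<in> carrier_mat r c \<Longrightarrow> Y \<in> carrier_mat r c \<Longrightarrow> F * X = F * Y \<Longrightarrow> X = Y"
    using mult_left_cancel_injective[OF F inj] by blast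
  have Asuc: "A ^\<^sub>m (Suc j) = A * A ^\<^sub>m j" for j by (rule pow_mat_Suc_left[OF A])
  show AF: "A * F = F * L"
  proof -
    have "A * F = A * A ^\<^sub>m (k+1) * Z" unfolding FZ using A Z by (simp add: sa)
    also have "A * A ^\<^sub>m (k+1) = A ^\<^sub>m k * A * A" using Asuc[of "k+1"] by simp
    also have "\<dots> * Z = F * L" unfolding FW L_def by (simp add: sa)
    finally show ?thesis .
  qed
  show "L * (W * Z) = 1\<^sub>m r"
  proof (rule cancel[of _ r])
    have "F * (L * (W * Z)) = (A * F) * (W * Z)" unfolding AF by (simp add: sa)
    also have "\<dots> = A * (A ^\<^sub>m k * Z)" unfolding FW by (simp add: sa)
    also have "\<dots> = F" unfolding FZ using Asuc[of k] A Z by (simp add: sa)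
    finally show "F * (L * (W * Z)) = F * 1\<^sub>m r" by (simp add: sa)
  qed (use L W Z in auto)
  have AjF: "A ^\<^sub>m j * F = F * L ^\<^sub>m j" for j
  proof (induct j)
    case (Suc j)
    have "A ^\<^sub>m Suc j * F = A ^\<^sub>m j * (A * F)" using A by (simp add: sa)
    also have "\<dots> = (A ^\<^sub>m j * F) * L" unfolding AF using A by (simp add: sa)
    finally show ?case unfolding Suc using L by (simp add: sa)
  qed (use F in \<open>simp add: dims\<close>)
  show WF: "W * F = L ^\<^sub>m k"
    by (rule cancel[of _ r]) (use AjF[of k] W F L in \<open>auto simp: FW sa\<close>)
  show Ak1: "A ^\<^sub>m (k+1) = F * (L * W)"
    using Asuc[of k] FW AF by (simp add: sa flip: assoc_mult_mat_dims)
  show "W * A = L * W"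
  proof (rule cancel[of _ n])
    show "F * (W * A) = F * (L * W)" using FW Ak1 by (simp add: sa flip: assoc_mult_mat_dims)
  qed (use W A L in auto)
qed

lemma drazin_inv_full_rank_factor:
  fixes A F W L Li :: "'a::field mat"
  assumes A: "A \<in> carrier_mat n n" and F: "F \<in> carrier_mat n r" and W: "W \<in> carrier_mat r n"
    and L: "L \<in> carrier_mat r r" and Li: "Li \<in> carrier_mat r r" and ind: "mat_index A = k"
    and FW: "A ^\<^sub>m k = F * W" and AF: "A * F = F * L" and WA: "W * A = L * W" and WF: "W * F = L ^\<^sub>m k"
    and Ak1: "A ^\<^sub>m (k+1) = F * (L * W)" and inv: "L * Li = 1\<^sub>m r"
  shows "drazin_inv A = F * Li ^\<^sub>m (k+1) * W"
proof (rule drazin_inv_eqI[OF A])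
  define Ki where "Ki = Li ^\<^sub>m (k+1)"
  have Ki: "Ki \<in> carrier_mat r r" unfolding Ki_def using pow_carrier_mat[OF Li] .
  have dims: "dim_row A = n" "dim_col A = n" "dim_row F = n" "dim_col F = r" "dim_row W = r"
    "dim_col W = n" "dim_row L = r" "dim_col L = r" "dim_row Ki = r" "dim_col Ki = r"
    using A F W L Ki by auto
  note sa = dims assoc_mult_mat_dims
  have LKi: "L ^\<^sub>m (k+1) * Ki = 1\<^sub>m r" unfolding Ki_def by (rule pow_mat_right_inverse[OF L Li inv])
  have KiL: "Ki * L ^\<^sub>m (k+1) = 1\<^sub>m r" using mat_mult_left_right_inverse[OF pow_carrier_mat[OF L] Ki LKi] .
  have comm: "L * Ki = Ki * L" unfolding Ki_def by (rule pow_mat_inverse_commute[OF L Li inv])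
  have WAF: "W * A * F = L ^\<^sub>m (k+1)"
    using WF pow_mat_Suc_left[OF L, of k] WA by (simp add: sa)
  show "F * Li ^\<^sub>m (k+1) * W \<in> carrier_mat n n"
    using F W pow_carrier_mat[OF Li] by (meson mult_carrier_mat)
  have "A ^\<^sub>m (k+1) * (F * Ki * W) = F * ((L * W * F) * Ki) * W" unfolding Ak1 by (simp add: sa)
  also have "L * W * F = L ^\<^sub>m (k+1)" using WF pow_mat_Suc_left[OF L, of k] by (simp add: sa)
  finally show "A ^\<^sub>m (mat_index A + 1) * (F * Li ^\<^sub>m (k+1) * W) = A ^\<^sub>m (mat_index A)"
    using LKi FW F W unfolding ind Ki_def by simp
  have "F * Ki * W * A * (F * Ki * W) = F * (Ki * (W * A * F) * Ki) * W" by (simp add: sa)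
  also have "Ki * (W * A * F) * Ki = Ki" using WAF KiL Ki by simp
  finally show "F * Li ^\<^sub>m (k+1) * W * A * (F * Li ^\<^sub>m (k+1) * W) = F * Li ^\<^sub>m (k+1) * W"
    unfolding Ki_def .
  have "A * (F * Ki * W) = F * (L * Ki) * W" using AF by (simp add: sa flip: assoc_mult_mat_dims)
  also have "\<dots> = F * Ki * W * A" using comm WA by (simp add: sa)
  finally show "A * (F * Li ^\<^sub>m (k+1) * W) = F * Li ^\<^sub>m (k+1) * W * A" unfolding Ki_def .
qed

lemma drazin_inv_full_rank_factorization:
  fixes A :: "'a::field mat"
  assumes A: "A \<in> carrier_mat n n" and ind: "mat_index A = k"
    and rk: "mrank (A ^\<^sub>m (k+1)) = mrank (A ^\<^sub>m k)"
  defines "r \<equiv> mrank (A ^\<^sub>m k)"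
  shows "\<exists>F G Ki W E. F \<in> carrier_mat n r \<and> G \<in> carrier_mat r n \<and> Ki \<in> carrier_mat r r
    \<and> W \<in> carrier_mat r n \<and> E \<in> carrier_mat n r \<and> A ^\<^sub>m (k+1) = F * G \<and> G * F * Ki = 1\<^sub>m r
    \<and> A ^\<^sub>m k = F * W \<and> A ^\<^sub>m k = E * G \<and> drazin_inv A = F * Ki * W \<and> drazin_inv A = E * Ki * G"
proof -
  obtain F W Z where F: "F \<in> carrier_mat n r" and W: "W \<in> carrier_mat r n" and Z: "Z \<in> carrier_mat n r"
    and FW: "A ^\<^sub>m k = F * W" and FZ: "F = A ^\<^sub>m (k+1) * Z"
    and inj: "\<forall>v \<in> carrier_vec r. F *\<^sub>v v = 0\<^sub>v n \<longrightarrow> v = 0\<^sub>v r"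
    using pow_full_rank_factorization[OF A rk] unfolding r_def by blast
  define L where "L = W * A * A * Z"
  define Li where "Li = W * Z"
  define Ki where "Ki = Li ^\<^sub>m (k+1)"
  have L: "L \<in> carrier_mat r r" and Li: "Li \<in> carrier_mat r r" and Ki: "Ki \<in> carrier_mat r r"
    unfolding L_def Li_def Ki_def using W A Z pow_carrier_mat[of "W * Z" r] by auto
  note shift = full_rank_factorization_shift[OF A F W Z FW FZ inj, folded L_def Li_def]
  have dims: "dim_row A = n" "dim_col A = n" "dim_row F = n" "dim_col F = r" "dim_row W = r"
    "dim_col W = n" "dim_row L = r" "dim_col L = r" "dim_row Li = r" "dim_col Li = r" "dim_row Ki = r"
    "dim_col Ki = r" using A F W L Li Ki by auto
  note sa = dims assoc_mult_mat_dims
  have LiL: "Li * L = 1\<^sub>m r" using mat_mult_left_right_inverse[OF L Li shift(2)] .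
  have AD: "drazin_inv A = F * Ki * W"
    unfolding Ki_def by (rule drazin_inv_full_rank_factor[OF A F W L Li ind FW shift(1,4,3,5,2)])
  have "L * W * F * Ki = 1\<^sub>m r"
    using shift(3) pow_mat_Suc_left[OF L, of k] pow_mat_right_inverse[OF L Li shift(2), of "k+1"]
    unfolding Ki_def by (simp add: sa)
  moreover have "A ^\<^sub>m k = F * Li * (L * W)"
  proof -
    have "Li * (L * W) = W" using LiL W by (simp add: dims flip: assoc_mult_mat_dims)
    then show ?thesis using FW by (simp add: sa)
  qed
  moreover have "drazin_inv A = F * Li * Ki * (L * W)"
  proof -
    have "Li * Ki * L = Li * (L * Ki)"
      using pow_mat_inverse_commute[OF L Li shift(2), of "k+1"] unfolding Ki_def[symmetric] by (simp add: sa)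
    also have "\<dots> = Ki" using LiL Ki by (simp add: dims flip: assoc_mult_mat_dims)
    finally have LKL: "Li * Ki * L = Ki" .
    have "F * Li * Ki * (L * W) = F * (Li * Ki * L) * W" by (simp add: sa)
    then show ?thesis unfolding LKL AD by (rule sym)
  qed
  moreover have "L * W \<in> carrier_mat r n" "F * Li \<in> carrier_mat n r" using L W F Li by auto
  ultimately show ?thesis using F Ki W FW AD shift(5) by blast
qed

section \<open>Cramer's rule for the Drazin inverse\<close>

locale index_rank =
  fixes A :: "'a::field mat" and n k r :: nat
  assumes A: "A \<in> carrier_mat n n" and ind: "mat_index A = k"
    and rk: "mrank (A ^\<^sub>m (k+1)) = mrank (A ^\<^sub>m k)" and r: "mrank (A ^\<^sub>m k) = r"
begin

lemma drazin_inv_carrier: "drazin_inv A \<in> carrier_mat n n"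
  using drazin_inv_full_rank_factorization[OF A ind rk] by (auto simp: r)

lemma sum_principal_minors_drazin_nonzero:
  "(\<Sum>\<beta>\<in>idx_sets r n. det (principal_sub (A ^\<^sub>m (k+1)) \<beta>)) \<noteq> 0"
proof -
  obtain F G Ki where F: "F \<in> carrier_mat n r" and G: "G \<in> carrier_mat r n" and Ki: "Ki \<in> carrier_mat r r"
    and AFG: "A ^\<^sub>m (k+1) = F * G" and inv: "G * F * Ki = 1\<^sub>m r"
    using drazin_inv_full_rank_factorization[OF A ind rk] unfolding r by blast
  have "det (G * F) * det Ki = 1" using det_mult[of "G * F" r Ki] F G Ki inv by simp
  then show ?thesis unfolding AFG sum_principal_minors_mult[OF F G] by auto
qed

lemma drazin_cramer_col:
  assumes Y: "Y \<in> carrier_mat n c" and i: "i < n" and t: "t < c"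
  shows "(\<Sum>\<beta>\<in>idx_sets_with r n i. det (principal_sub (replace_col (A ^\<^sub>m (k+1)) (col (A ^\<^sub>m k * Y) t) i) \<beta>))
    = (\<Sum>\<beta>\<in>idx_sets r n. det (principal_sub (A ^\<^sub>m (k+1)) \<beta>)) * (drazin_inv A * Y) $$ (i,t)"
proof -
  obtain F G Ki W where F: "F \<in> carrier_mat n r" and G: "G \<in> carrier_mat r n" and Ki: "Ki \<in> carrier_mat r r"
    and W: "W \<in> carrier_mat r n" and AFG: "A ^\<^sub>m (k+1) = F * G" and inv: "G * F * Ki = 1\<^sub>m r"
    and FW: "A ^\<^sub>m k = F * W" and AD: "drazin_inv A = F * Ki * W"
    using drazin_inv_full_rank_factorization[OF A ind rk] unfolding r by blast
  have "A ^\<^sub>m k * Y = F * (W * Y)" and "drazin_inv A * Y = F * Ki * (W * Y)"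
    using F Ki W Y by (simp_all add: FW AD assoc_mult_mat_dims)
  then show ?thesis
    using sum_principal_minors_replace_col[OF F G Ki inv _ i t, of "W * Y"] W Y
    unfolding AFG sum_principal_minors_mult[OF F G] by simp
qed

lemma drazin_cramer_row:
  assumes Y: "Y \<in> carrier_mat c n" and l: "l < c" and j: "j < n"
  shows "(\<Sum>\<alpha>\<in>idx_sets_with r n j. det (principal_sub (replace_row (A ^\<^sub>m (k+1)) (row (Y * A ^\<^sub>m k) l) j) \<alpha>))
    = (\<Sum>\<alpha>\<in>idx_sets r n. det (principal_sub (A ^\<^sub>m (k+1)) \<alpha>)) * (Y * drazin_inv A) $$ (l,j)"
proof -
  obtain F G Ki E where F: "F \<in> carrier_mat n r" and G: "G \<in> carrier_mat r n" and Ki: "Ki \<in> carrier_mat r r"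
    and E: "E \<in> carrier_mat n r" and AFG: "A ^\<^sub>m (k+1) = F * G" and inv: "G * F * Ki = 1\<^sub>m r"
    and EG: "A ^\<^sub>m k = E * G" and AD: "drazin_inv A = E * Ki * G"
    using drazin_inv_full_rank_factorization[OF A ind rk] unfolding r by blast
  have "Y * A ^\<^sub>m k = Y * E * G" and "Y * drazin_inv A = Y * E * Ki * G"
    using E Ki G Y by (simp_all add: EG AD assoc_mult_mat_dims)
  then show ?thesis
    using sum_principal_minors_replace_row[OF F G Ki inv _ l j, of "Y * E"] E Y
    unfolding AFG sum_principal_minors_mult[OF F G] by simp
qed

lemma drazin_cramer_col_vec:
  assumes Y: "Y \<in> carrier_mat n c" and i: "i < n"
  shows "vec c (\<lambda>t. \<Sum>\<beta>\<in>idx_sets_with r n i. det (principal_sub (replace_col (A ^\<^sub>m (k+1)) (col (A ^\<^sub>m k * Y) t) i) \<beta>))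
    = row ((\<Sum>\<beta>\<in>idx_sets r n. det (principal_sub (A ^\<^sub>m (k+1)) \<beta>)) \<cdot>\<^sub>m (drazin_inv A * Y)) i"
  using drazin_cramer_col[OF Y i] drazin_inv_carrier Y i by (intro eq_vecI) auto

lemma drazin_cramer_row_vec:
  assumes Y: "Y \<in> carrier_mat c n" and j: "j < n"
  shows "vec c (\<lambda>l. \<Sum>\<alpha>\<in>idx_sets_with r n j. det (principal_sub (replace_row (A ^\<^sub>m (k+1)) (row (Y * A ^\<^sub>m k) l) j) \<alpha>))
    = col ((\<Sum>\<alpha>\<in>idx_sets r n. det (principal_sub (A ^\<^sub>m (k+1)) \<alpha>)) \<cdot>\<^sub>m (Y * drazin_inv A)) j"
  using drazin_cramer_row[OF Y _ j] drazin_inv_carrier Y j by (intro eq_vecI) auto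

end

lemma (in index_rank) drazin_solution_cramer_col:
  assumes "index_rank B m kB rB" and D: "D \<in> carrier_mat n m" and i: "i < n" and j: "j < m"
  shows "(\<Sum>\<beta>\<in>idx_sets_with r n i. det (principal_sub (replace_col (A ^\<^sub>m (k+1))
      (vec n (\<lambda>l. \<Sum>\<alpha>\<in>idx_sets_with rB m j.
        det (principal_sub (replace_row (B ^\<^sub>m (kB+1)) (row (A ^\<^sub>m k * D * B ^\<^sub>m kB) l) j) \<alpha>))) i) \<beta>))
    = (\<Sum>\<beta>\<in>idx_sets r n. det (principal_sub (A ^\<^sub>m (k+1)) \<beta>))
      * (\<Sum>\<alpha>\<in>idx_sets rB m. det (principal_sub (B ^\<^sub>m (kB+1)) \<alpha>)) * (drazin_inv A * D * drazin_inv B) $$ (i,j)"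
proof -
  interpret B: index_rank B m kB rB by (rule assms(1))
  define cB where "cB = (\<Sum>\<alpha>\<in>idx_sets rB m. det (principal_sub (B ^\<^sub>m (kB+1)) \<alpha>))"
  have AD: "drazin_inv A \<in> carrier_mat n n" and BD: "drazin_inv B \<in> carrier_mat m m"
    by (rule drazin_inv_carrier B.drazin_inv_carrier)+
  have DBD: "D * drazin_inv B \<in> carrier_mat n m" using D BD by simp
  note assoc = assoc_mult_mat[of _ n n _ m _ m]
  have "vec n (\<lambda>l. \<Sum>\<alpha>\<in>idx_sets_with rB m j.
      det (principal_sub (replace_row (B ^\<^sub>m (kB+1)) (row (A ^\<^sub>m k * D * B ^\<^sub>m kB) l) j) \<alpha>))
    = col (cB \<cdot>\<^sub>m (A ^\<^sub>m k * D * drazin_inv B)) j"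
    unfolding cB_def by (rule B.drazin_cramer_row_vec[OF mult_carrier_mat[OF pow_carrier_mat[OF A] D] j])
  also have "cB \<cdot>\<^sub>m (A ^\<^sub>m k * D * drazin_inv B) = A ^\<^sub>m k * (cB \<cdot>\<^sub>m (D * drazin_inv B))"
    using A D BD by (simp add: mult_smult_distrib[OF pow_carrier_mat[OF A] DBD] assoc)
  finally have "(\<Sum>\<beta>\<in>idx_sets_with r n i. det (principal_sub (replace_col (A ^\<^sub>m (k+1))
      (vec n (\<lambda>l. \<Sum>\<alpha>\<in>idx_sets_with rB m j.
        det (principal_sub (replace_row (B ^\<^sub>m (kB+1)) (row (A ^\<^sub>m k * D * B ^\<^sub>m kB) l) j) \<alpha>))) i) \<beta>))
    = (\<Sum>\<beta>\<in>idx_sets r n. det (principal_sub (A ^\<^sub>m (k+1)) \<beta>)) * (drazin_inv A * (cB \<cdot>\<^sub>m (D * drazin_inv B))) $$ (i,j)"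
    by (simp only: drazin_cramer_col[OF smult_carrier_mat[OF DBD] i j])
  also have "drazin_inv A * (cB \<cdot>\<^sub>m (D * drazin_inv B)) = cB \<cdot>\<^sub>m (drazin_inv A * D * drazin_inv B)"
    using AD D BD by (simp add: mult_smult_distrib[OF AD DBD] assoc)
  finally show ?thesis unfolding cB_def using AD D BD i j by simp
qed

lemma (in index_rank) drazin_solution_cramer_row:
  assumes "index_rank C p kC rC" and D: "D \<in> carrier_mat p n" and i: "i < p" and j: "j < n"
  shows "(\<Sum>\<alpha>\<in>idx_sets_with r n j. det (principal_sub (replace_row (A ^\<^sub>m (k+1))
      (vec n (\<lambda>t. \<Sum>\<beta>\<in>idx_sets_with rC p i.
        det (principal_sub (replace_col (C ^\<^sub>m (kC+1)) (col (C ^\<^sub>m kC * D * A ^\<^sub>m k) t) i) \<beta>))) j) \<alpha>))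
    = (\<Sum>\<beta>\<in>idx_sets rC p. det (principal_sub (C ^\<^sub>m (kC+1)) \<beta>))
      * (\<Sum>\<alpha>\<in>idx_sets r n. det (principal_sub (A ^\<^sub>m (k+1)) \<alpha>)) * (drazin_inv C * D * drazin_inv A) $$ (i,j)"
proof -
  interpret C: index_rank C p kC rC by (rule assms(1))
  define cC where "cC = (\<Sum>\<beta>\<in>idx_sets rC p. det (principal_sub (C ^\<^sub>m (kC+1)) \<beta>))"
  have AD: "drazin_inv A \<in> carrier_mat n n" and CD: "drazin_inv C \<in> carrier_mat p p"
    by (rule drazin_inv_carrier C.drazin_inv_carrier)+
  have CDD: "drazin_inv C * D \<in> carrier_mat p n" using D CD by simp
  note assoc = assoc_mult_mat[of _ p p _ n _ n]
  have CDA: "C ^\<^sub>m kC * D * A ^\<^sub>m k = C ^\<^sub>m kC * (D * A ^\<^sub>m k)" using C.A D A by (simp add: assoc)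
  have "vec n (\<lambda>t. \<Sum>\<beta>\<in>idx_sets_with rC p i.
      det (principal_sub (replace_col (C ^\<^sub>m (kC+1)) (col (C ^\<^sub>m kC * D * A ^\<^sub>m k) t) i) \<beta>))
    = row (cC \<cdot>\<^sub>m (drazin_inv C * (D * A ^\<^sub>m k))) i"
    unfolding cC_def CDA by (rule C.drazin_cramer_col_vec[OF mult_carrier_mat[OF D pow_carrier_mat[OF A]] i])
  also have "cC \<cdot>\<^sub>m (drazin_inv C * (D * A ^\<^sub>m k)) = (cC \<cdot>\<^sub>m (drazin_inv C * D)) * A ^\<^sub>m k"
    using CD D A by (simp add: mult_smult_assoc_mat[OF CDD pow_carrier_mat[OF A]] assoc)
  finally have "(\<Sum>\<alpha>\<in>idx_sets_with r n j. det (principal_sub (replace_row (A ^\<^sub>m (k+1))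
      (vec n (\<lambda>t. \<Sum>\<beta>\<in>idx_sets_with rC p i.
        det (principal_sub (replace_col (C ^\<^sub>m (kC+1)) (col (C ^\<^sub>m kC * D * A ^\<^sub>m k) t) i) \<beta>))) j) \<alpha>))
    = (\<Sum>\<alpha>\<in>idx_sets r n. det (principal_sub (A ^\<^sub>m (k+1)) \<alpha>)) * (cC \<cdot>\<^sub>m (drazin_inv C * D) * drazin_inv A) $$ (i,j)"
    by (simp only: drazin_cramer_row[OF smult_carrier_mat[OF CDD] i j])
  also have "cC \<cdot>\<^sub>m (drazin_inv C * D) * drazin_inv A = cC \<cdot>\<^sub>m (drazin_inv C * D * drazin_inv A)"
    by (rule mult_smult_assoc_mat[OF CDD AD])
  finally show ?thesis unfolding cC_def using CD D AD i j by simp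
qed

theorem theorem4p9:
  fixes A :: "complex mat" and B :: "complex mat" and D :: "complex mat"
    and n m k1 k2 r1 r2 :: nat
  assumes A: "A \<in> carrier_mat n n"
    and B: "B \<in> carrier_mat m m"
    and Dc: "D \<in> carrier_mat n m"
    and indA: "mat_index A = k1"
    and rA: "mrank (A ^\<^sub>m (k1+1)) = mrank (A ^\<^sub>m k1)" "mrank (A ^\<^sub>m k1) = r1" "r1 \<le> n"
    and indB: "mat_index B = k2"
    and rB: "mrank (B ^\<^sub>m (k2+1)) = mrank (B ^\<^sub>m k2)" "mrank (B ^\<^sub>m k2) = r2" "r2 \<le> m"
  defines "dB \<equiv> (\<lambda>j. vec n (\<lambda>l. \<Sum>\<alpha>\<in>idx_sets_with r2 m j.
                det (principal_sub (replace_row (B ^\<^sub>m (k2+1)) (row (A ^\<^sub>m k1 * D * B ^\<^sub>m k2) l) j) \<alpha>)))"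
    and "dA \<equiv> (\<lambda>i. vec m (\<lambda>t. \<Sum>\<beta>\<in>idx_sets_with r1 n i.
                det (principal_sub (replace_col (A ^\<^sub>m (k1+1)) (col (A ^\<^sub>m k1 * D * B ^\<^sub>m k2) t) i) \<beta>)))"
    and "den \<equiv> (\<Sum>\<beta>\<in>idx_sets r1 n. det (principal_sub (A ^\<^sub>m (k1+1)) \<beta>)) *
               (\<Sum>\<alpha>\<in>idx_sets r2 m. det (principal_sub (B ^\<^sub>m (k2+1)) \<alpha>))"
    and "X \<equiv> drazin_inv A * D * drazin_inv B"
  shows "\<forall>i<n. \<forall>j<m.
     X $$ (i,j) = (\<Sum>\<beta>\<in>idx_sets_with r1 n i.
                     det (principal_sub (replace_col (A ^\<^sub>m (k1+1)) (dB j) i) \<beta>)) / den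
   \<and> X $$ (i,j) = (\<Sum>\<alpha>\<in>idx_sets_with r2 m j.
                     det (principal_sub (replace_row (B ^\<^sub>m (k2+1)) (dA i) j) \<alpha>)) / den"
proof -
  interpret A: index_rank A n k1 r1 using A indA rA by unfold_locales
  interpret B: index_rank B m k2 r2 using B indB rB by unfold_locales
  have "den \<noteq> 0"
    unfolding den_def using A.sum_principal_minors_drazin_nonzero B.sum_principal_minors_drazin_nonzero by simp
  then show ?thesis
    unfolding dB_def dA_def
    using A.drazin_solution_cramer_col[OF B.index_rank_axioms Dc] B.drazin_solution_cramer_row[OF A.index_rank_axioms Dc]
    by (simp add: den_def X_def)
qed

end
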